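(* Let $\mathfrak{A}=(S_\Omega,S_{\mathcal E},\Omega,\mathcal E,B,u)$ be an accessible GPT fragment, and let $H_\Omega:S_\Omega\to\mathbb R^n$ and $H_{\mathcal E}:S_{\mathcal E}^*\to\mathbb R^m$ be its facet maps. Then $\mathfrak A$ admits a simplicial-cone embedding if and only if there exists a real $m\times n$ matrix $\sigma$ with all entries nonnegative such that $$B(w,v)=H_{\mathcal E}(w)^T\,\sigma\,H_\Omega(v)\qquad\text{for all } w\in S_{\mathcal E}^*,\ v\in S_\Omega .$$ In the quantum case ($S_\Omega,S_{\mathcal E}$ subspaces of the Hermitian operators on a finite-dimensional Hilbert space $\mathcal H$, spanned respectively by a finite set $\Omega$ of positive semidefinite operators and a finite set $\mathcal E$ of operators $0\le E\le \mathbb 1$, with effects acting by the trace pairing and $B(w,v)=\mathrm{tr}(wv)$), this condition reads $I_{\mathcal E}^T I_\Omega=H_{\mathcal E}^T\sigma H_\Omega$ in matrix form, where $I_\Omega,I_{\mathcal E}$ are the inclusion maps of $S_\Omega,S_{\mathcal E}$ into the space of Hermitian operators (expressed in bases orthonormal for the Hilbert–Schmidt inner product).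
   Context: An accessible GPT fragment $\mathfrak A=(S_\Omega,S_{\mathcal E},\Omega,\mathcal E,B,u)$ consists of: finite-dimensional real vector spaces $S_\Omega$ and $S_{\mathcal E}$; a set $\Omega\subset S_\Omega$ of states which spans $S_\Omega$; a set $\mathcal E\subset S_{\mathcal E}^*$ of effects which spans $S_{\mathcal E}^*$; a bilinear form $B:S_{\mathcal E}^*\times S_\Omega\to\mathbb R$ (the probability rule, the probability of effect $e$ on state $s$ being $B(e,s)$); and a unit effect $u\in\mathcal E$. The convex hulls of $\Omega$ and of $\mathcal E$ are assumed to have finitely many extreme points. $\mathrm{Cone}[\Omega]=\{\sum_\alpha r_\alpha s_\alpha: s_\alpha\in\Omega, r_\alpha\ge0\}$, and similarly $\mathrm{Cone}[\mathcal E]$; these are polyhedral cones. The dual cone $\mathrm{Cone}[\Omega]^*=\{h\in S_\Omega^*: h(v)\ge 0\ \forall v\in\mathrm{Cone}[\Omega]\}$ and $\mathrm{Cone}[\mathcal E]^*=\{g\in S_{\mathcal E}: w(g)\ge0\ \forall w\in\mathrm{Cone}[\mathcal E]\}$ (identifying $S_{\mathcal E}^{**}=S_{\mathcal E}$). Facet maps: let $h_1,\dots,h_n\in S_\Omega^*$ be one representative of each extreme ray of $\mathrm{Cone}[\Omega]^*$ (equivalently, the facet inequalities of $\mathrm{Cone}[\Omega]$), and define $H_\Omega(v)=(h_1(v),\dots,h_n(v))^T$; let $g_1,\dots,g_m\in S_{\mathcal E}$ be one representative of each extreme ray of $\mathrm{Cone}[\mathcal E]^*$, and define $H_{\mathcal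 E}(w)=(w(g_1),\dots,w(g_m))^T$. Thus $H_\Omega(v)\ge_e0$ iff $v\in\mathrm{Cone}[\Omega]$ and $H_{\mathcal E}(w)\ge_e 0$ iff $w\in\mathrm{Cone}[\mathcal E]$, where $\ge_e$ denotes entrywise nonnegativity. A simplicial-cone embedding of $\mathfrak A$ is a finite set $\Lambda$ together with linear maps $\tau_\Omega:S_\Omega\to\mathbb R^\Lambda$ and $\tau_{\mathcal E}:S_{\mathcal E}^*\to\mathbb R^\Lambda$ such that $\tau_\Omega(s)\ge_e 0$ for all $s\in\Omega$, $\tau_{\mathcal E}(e)\ge_e0$ for all $e\in\mathcal E$, and $B(w,v)=\tau_{\mathcal E}(w)\cdot\tau_\Omega(v)$ (standard dot product on $\mathbb R^\Lambda$) for all $w\in S_{\mathcal E}^*$, $v\in S_\Omega$. A simplex embedding is a simplicial-cone embedding which additionally satisfies $\tau_{\mathcal E}(u)=(1,1,\dots,1)$. (A scenario is called classically explainable when it admits a simplex embedding.) *)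

theory Defs
  imports "HOL-Analysis.Analysis"
begin

text \<open>The state space S_Omega is modelled by a finite-dimensional real vector space type 'a,
  the effect space S_E^* by a type 'b. Linear functionals on them are functions to real
  that are linear.\<close>

definition gpt_cone :: "'a::real_vector set \<Rightarrow> 'a set" where
  "gpt_cone X = convex_cone hull X"

definition dual_cone :: "'a::real_vector set \<Rightarrow> ('a \<Rightarrow> real) set" where
  "dual_cone X = {h. linear h \<and> (\<forall>v\<in>gpt_cone X. 0 \<le> h v)}"

definition extreme_ray_gen :: "('a \<Rightarrow> real) set \<Rightarrow> ('a \<Rightarrow> real) \<Rightarrow> bool" where
  "extreme_ray_gen C h \<longleftrightarrow> h \<in> C \<and> h \<noteq> (\<lambda>x. 0) \<and>
     (\<forall>h1\<in>C. \<forall>h2\<in>C. (\<forall>x. h x = h1 x + h2 x) \<longrightarrow> (\<exists>c\<ge>0. \<forall>x. h1 x = c * h x))"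

text \<open>Facet map: a list containing exactly one representative of each extreme ray of
  the dual cone of Cone[X]; the facet map is v \<mapsto> (hs!0 v, ..., hs!(n-1) v).\<close>
definition facet_map :: "'a::real_vector set \<Rightarrow> ('a \<Rightarrow> real) list \<Rightarrow> bool" where
  "facet_map X hs \<longleftrightarrow>
     (\<forall>i<length hs. extreme_ray_gen (dual_cone X) (hs ! i)) \<and>
     (\<forall>i<length hs. \<forall>j<length hs. i \<noteq> j \<longrightarrow>
         \<not> (\<exists>c>0. \<forall>x. (hs ! i) x = c * (hs ! j) x)) \<and>
     (\<forall>h. extreme_ray_gen (dual_cone X) h \<longrightarrow>
         (\<exists>i<length hs. \<exists>c>0. \<forall>x. h x = c * (hs ! i) x))"

definition accessible_gpt_fragment ::
  "'a::euclidean_space set \<Rightarrow> 'b::euclidean_space set \<Rightarrow> ('b \<Rightarrow> 'a \<Rightarrow> real) \<Rightarrow> 'b \<Rightarrow> bool" where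
  "accessible_gpt_fragment \<Omega> \<E> B u \<longleftrightarrow>
     span \<Omega> = UNIV \<and> span \<E> = UNIV \<and> bilinear B \<and> u \<in> \<E> \<and>
     polytope (convex hull \<Omega>) \<and> polytope (convex hull \<E>)"

definition simplicial_cone_embedding ::
  "'a::real_vector set \<Rightarrow> 'b::real_vector set \<Rightarrow> ('b \<Rightarrow> 'a \<Rightarrow> real) \<Rightarrow>
   nat \<Rightarrow> ('a \<Rightarrow> nat \<Rightarrow> real) \<Rightarrow> ('b \<Rightarrow> nat \<Rightarrow> real) \<Rightarrow> bool" where
  "simplicial_cone_embedding \<Omega> \<E> B k \<tau>\<Omega> \<tau>\<E> \<longleftrightarrow>
     (\<forall>l<k. linear (\<lambda>v. \<tau>\<Omega> v l)) \<and> (\<forall>l<k. linear (\<lambda>w. \<tau>\<E> w l)) \<and>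
     (\<forall>s\<in>\<Omega>. \<forall>l<k. 0 \<le> \<tau>\<Omega> s l) \<and> (\<forall>e\<in>\<E>. \<forall>l<k. 0 \<le> \<tau>\<E> e l) \<and>
     (\<forall>w v. B w v = (\<Sum>l<k. \<tau>\<E> w l * \<tau>\<Omega> v l))"

definition admits_simplicial_cone_embedding ::
  "'a::real_vector set \<Rightarrow> 'b::real_vector set \<Rightarrow> ('b \<Rightarrow> 'a \<Rightarrow> real) \<Rightarrow> bool" where
  "admits_simplicial_cone_embedding \<Omega> \<E> B \<longleftrightarrow>
     (\<exists>k \<tau>\<Omega> \<tau>\<E>. simplicial_cone_embedding \<Omega> \<E> B k \<tau>\<Omega> \<tau>\<E>)"

end

theory Submission
  imports Defs
begin

text \<open>The components of a simplicial-cone embedding are linear functionals that are nonnegative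
  on states resp. effects, i.e. elements of the dual cones. Since \<open>\<Omega>\<close> spans, its dual cone is
  closed and pointed, so it has a compact convex base; by Krein--Milman the base is the convex
  hull of its extreme points, and these lie on extreme rays, i.e. are positive multiples of facet
  functionals. Hence every component is a nonnegative combination of facet functionals, and
  expanding \<open>B(w,v) = \<Sum>\<^sub>l \<tau>\<^sub>\<E>(w)\<^sub>l \<tau>\<^sub>\<Omega>(v)\<^sub>l\<close> yields \<open>\<sigma>\<close>. Conversely, a nonnegative \<open>\<sigma>\<close>
  gives an embedding indexed by the pairs \<open>(i,j)\<close>.\<close>

lemma linear_real_eq_inner:
  fixes h :: "'a::euclidean_space \<Rightarrow> real"
  assumes "linear h"
  shows "h = (\<lambda>x. adjoint h 1 \<bullet> x)"
proof
  fix x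
  show "h x = adjoint h 1 \<bullet> x"
    using adjoint_works[OF assms, of x 1] by (simp add: inner_commute)
qed

lemma spanning_set_dual_positive_point:
  fixes X :: "'a::euclidean_space set"
  assumes "span X = UNIV"
  shows "\<exists>c. \<forall>a. (\<forall>x\<in>X. 0 \<le> a \<bullet> x) \<and> a \<noteq> 0 \<longrightarrow> 0 < a \<bullet> c"
proof -
  obtain Bs where Bs: "Bs \<subseteq> X" "independent Bs" "X \<subseteq> span Bs"
    by (meson basis_exists)
  have "finite Bs" using Bs(2) by (rule finiteI_independent)
  have "span Bs = UNIV"
    using span_minimal[OF Bs(3) subspace_span] assms by auto
  show ?thesis
  proof (intro exI[of _ "\<Sum>Bs"] allI impI, elim conjE)
    fix a :: 'a assume a: "\<forall>x\<in>X. 0 \<le> a \<bullet> x" and "a \<noteq> 0"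
    have nonneg: "\<forall>b\<in>Bs. 0 \<le> a \<bullet> b" using a Bs(1) by blast
    hence "0 \<le> a \<bullet> \<Sum>Bs" by (simp add: inner_sum_right sum_nonneg)
    moreover have "a \<bullet> \<Sum>Bs \<noteq> 0"
    proof
      assume "a \<bullet> \<Sum>Bs = 0"
      hence "\<forall>b\<in>Bs. a \<bullet> b = 0"
        using sum_nonneg_eq_0_iff[OF \<open>finite Bs\<close>, where f="\<lambda>b. a \<bullet> b"] nonneg
        by (simp add: inner_sum_right)
      hence "a \<bullet> a = 0" using orthogonal_to_span[of a Bs a] \<open>span Bs = UNIV\<close>
        by (simp add: orthogonal_def)
      thus False using \<open>a \<noteq> 0\<close> by simp
    qed
    ultimately show "0 < a \<bullet> \<Sum>Bs" by linarith
  qed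
qed

lemma compact_cone_slice:
  fixes K :: "'a::euclidean_space set"
  assumes "closed K" "conic K" and pos: "\<And>a. a \<in> K \<Longrightarrow> a \<noteq> 0 \<Longrightarrow> 0 < a \<bullet> c"
  shows "compact (K \<inter> {a. a \<bullet> c = 1})"
proof -
  have normalize: "(1 / norm a) *\<^sub>R a \<in> K \<inter> sphere 0 1" if "a \<in> K" "a \<noteq> 0" for a
    using that \<open>conic K\<close> by (auto simp: conic_def)
  have "bounded (K \<inter> {a. a \<bullet> c = 1})"
  proof (cases "K \<inter> sphere 0 1 = {}")
    case True
    hence "K \<inter> {a. a \<bullet> c = 1} = {}" using normalize by fastforce
    thus ?thesis by simp
  next
    case False
    have "compact (K \<inter> sphere 0 1)"
      using \<open>closed K\<close> by (simp add: closed_Int_compact)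
    moreover have "continuous_on (K \<inter> sphere 0 1) (\<lambda>a. a \<bullet> c)"
      by (intro continuous_intros)
    ultimately obtain m where m: "m \<in> K \<inter> sphere 0 1"
      and min: "\<And>y. y \<in> K \<inter> sphere 0 1 \<Longrightarrow> m \<bullet> c \<le> y \<bullet> c"
      using continuous_attains_inf[OF _ False] by blast
    have "0 < m \<bullet> c" using m pos[of m] by fastforce
    have "norm a \<le> 1 / (m \<bullet> c)" if "a \<in> K" "a \<bullet> c = 1" for a
    proof -
      have "a \<noteq> 0" using that by auto
      hence "m \<bullet> c \<le> (1 / norm a) * (a \<bullet> c)" using min[OF normalize] that by fastforce
      thus ?thesis using \<open>0 < m \<bullet> c\<close> \<open>a \<noteq> 0\<close> that(2) by (simp add: field_simps)
    qed
    thus ?thesis by (auto simp: bounded_iff)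
  qed
  moreover have "closed (K \<inter> {a. a \<bullet> c = 1})"
    using \<open>closed K\<close> closed_hyperplane[of c 1] by (simp add: inner_commute closed_Int)
  ultimately show ?thesis by (simp add: compact_eq_bounded_closed)
qed

lemma extreme_point_of_cone_slice_split:
  fixes K :: "'a::euclidean_space set"
  assumes "convex_cone K" and pos: "\<And>a. a \<in> K \<Longrightarrow> a \<noteq> 0 \<Longrightarrow> 0 < a \<bullet> c"
    and e: "e extreme_point_of (K \<inter> {a. a \<bullet> c = 1})"
    and "a1 \<in> K" "a2 \<in> K" "e = a1 + a2"
  shows "a1 = (a1 \<bullet> c) *\<^sub>R e"
proof -
  define t where "t = a1 \<bullet> c"
  have "e \<bullet> c = 1" using e by (simp add: extreme_point_of_def)
  hence t2: "a2 \<bullet> c = 1 - t" using \<open>e = a1 + a2\<close> by (simp add: t_def inner_add_left)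
  have "0 \<le> t" "0 \<le> 1 - t" using pos \<open>a1 \<in> K\<close> \<open>a2 \<in> K\<close> t2 t_def
    by (metis inner_zero_left order.refl order_less_imp_le)+
  consider "t = 0" | "t = 1" | "0 < t" "t < 1" using \<open>0 \<le> t\<close> \<open>0 \<le> 1 - t\<close> by linarith
  thus ?thesis
  proof cases
    case 1
    thus ?thesis using pos[OF \<open>a1 \<in> K\<close>] t_def by fastforce
  next
    case 2
    hence "a2 = 0" using pos[OF \<open>a2 \<in> K\<close>] t2 by fastforce
    thus ?thesis using 2 \<open>e = a1 + a2\<close> t_def by simp
  next
    case 3
    define p1 where "p1 = (1 / t) *\<^sub>R a1"
    define p2 where "p2 = (1 / (1 - t)) *\<^sub>R a2"
    have "conic K" using \<open>convex_cone K\<close> by (simp add: convex_cone_def)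
    hence slice: "p1 \<in> K \<inter> {a. a \<bullet> c = 1}" "p2 \<in> K \<inter> {a. a \<bullet> c = 1}"
      using 3 t2 \<open>a1 \<in> K\<close> \<open>a2 \<in> K\<close> by (auto simp: p1_def p2_def t_def conic_def)
    have comb: "e = (1 - t) *\<^sub>R p2 + t *\<^sub>R p1"
      using \<open>e = a1 + a2\<close> 3 by (simp add: p1_def p2_def)
    show ?thesis
    proof (rule ccontr)
      assume ne: "a1 \<noteq> (a1 \<bullet> c) *\<^sub>R e"
      have "p1 \<noteq> e" using ne 3 by (auto simp: p1_def t_def)
      moreover have "p2 \<noteq> e"
      proof
        assume "p2 = e"
        hence "a2 = (1 - t) *\<^sub>R e" using 3 by (auto simp: p2_def)
        thus False using ne \<open>e = a1 + a2\<close> by (simp add: t_def algebra_simps)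
      qed
      ultimately have "p2 \<noteq> p1" using comb by (auto simp: algebra_simps)
      hence "e \<in> open_segment p2 p1" using comb 3 by (auto simp: in_segment)
      thus False using e slice by (auto simp: extreme_point_of_def)
    qed
  qed
qed

lemma mem_dual_cone_iff:
  "f \<in> dual_cone X \<longleftrightarrow> linear f \<and> (\<forall>x\<in>X. 0 \<le> f x)"
proof -
  have "gpt_cone X \<subseteq> {v. 0 \<le> f v}" if "linear f" "\<forall>x\<in>X. 0 \<le> f x"
    unfolding gpt_cone_def
  proof (rule hull_minimal)
    show "convex_cone {v. 0 \<le> f v}"
      using \<open>linear f\<close> by (auto simp: convex_cone_iff linear_add linear_scale linear_0)
  qed (use that in auto)
  thus ?thesis by (auto simp: dual_cone_def gpt_cone_def hull_inc)
qed

lemma facet_map_dual_cone: "facet_map X hs \<Longrightarrow> \<forall>j<length hs. hs ! j \<in> dual_cone X"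
  by (simp add: facet_map_def extreme_ray_gen_def)

definition nonneg_combination :: "('a \<Rightarrow> real) list \<Rightarrow> ('a \<Rightarrow> real) \<Rightarrow> bool" where
  "nonneg_combination fs f \<longleftrightarrow>
     (\<exists>c. (\<forall>j<length fs. 0 \<le> c j) \<and> (\<forall>x. f x = (\<Sum>j<length fs. c j * (fs ! j) x)))"

lemma convex_cone_nonneg_combination_inner:
  "convex_cone {a. nonneg_combination fs (\<lambda>x. a \<bullet> x)}"
  unfolding convex_cone_iff
proof (intro conjI ballI allI impI)
  show "0 \<in> {a. nonneg_combination fs (\<lambda>x. a \<bullet> x)}"
    by (auto simp: nonneg_combination_def intro!: exI[of _ "\<lambda>_. 0"])
next
  fix a b
  assume "a \<in> {a. nonneg_combination fs (\<lambda>x. a \<bullet> x)}"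
    and "b \<in> {a. nonneg_combination fs (\<lambda>x. a \<bullet> x)}"
  then obtain ca cb where "\<forall>j<length fs. 0 \<le> ca j" "\<forall>x. a \<bullet> x = (\<Sum>j<length fs. ca j * (fs ! j) x)"
    and "\<forall>j<length fs. 0 \<le> cb j" "\<forall>x. b \<bullet> x = (\<Sum>j<length fs. cb j * (fs ! j) x)"
    by (auto simp: nonneg_combination_def)
  thus "a + b \<in> {a. nonneg_combination fs (\<lambda>x. a \<bullet> x)}"
    by (auto simp: nonneg_combination_def inner_add_left distrib_right sum.distrib
        intro!: exI[of _ "\<lambda>j. ca j + cb j"])
next
  fix a and t :: real assume "a \<in> {a. nonneg_combination fs (\<lambda>x. a \<bullet> x)}" "0 \<le> t"
  then obtain ca where "\<forall>j<length fs. 0 \<le> ca j" "\<forall>x. a \<bullet> x = (\<Sum>j<length fs. ca j * (fs ! j) x)"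
    by (auto simp: nonneg_combination_def)
  thus "t *\<^sub>R a \<in> {a. nonneg_combination fs (\<lambda>x. a \<bullet> x)}"
    using \<open>0 \<le> t\<close> by (auto simp: nonneg_combination_def sum_distrib_left mult.assoc
        intro!: exI[of _ "\<lambda>j. t * ca j"])
qed

lemma nonneg_combination_multiple:
  assumes "i < length fs" "0 \<le> d" "\<forall>x. f x = d * (fs ! i) x"
  shows "nonneg_combination fs f"
  unfolding nonneg_combination_def
proof (intro exI[of _ "\<lambda>j. if j = i then d else 0"] conjI allI impI)
  fix x
  have "(\<Sum>j<length fs. (if j = i then d else 0) * (fs ! j) x) = d * (fs ! i) x"
    using assms(1) by (simp add: sum.delta if_distrib[of "\<lambda>c. c * _"] cong: if_cong)
  thus "f x = (\<Sum>j<length fs. (if j = i then d else 0) * (fs ! j) x)" using assms(3) by simp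
qed (use assms(2) in auto)

lemma convex_cone_dual_vectors: "convex_cone {a. \<forall>x\<in>X. 0 \<le> a \<bullet> x}"
proof -
  have "{a. \<forall>x\<in>X. 0 \<le> a \<bullet> x} = \<Inter> ((\<lambda>x. {a. x \<bullet> a \<ge> 0}) ` X)"
    by (auto simp: inner_commute)
  thus ?thesis by (auto intro: convex_cone_Inter convex_cone_halfspace_ge)
qed

lemma closed_dual_vectors: "closed {a. \<forall>x\<in>X. 0 \<le> a \<bullet> x}"
proof -
  have "{a. \<forall>x\<in>X. 0 \<le> a \<bullet> x} = \<Inter> ((\<lambda>x. {a. x \<bullet> a \<ge> 0}) ` X)"
    by (auto simp: inner_commute)
  thus ?thesis by (auto intro: closed_halfspace_ge)
qed

lemma extreme_ray_gen_of_extreme_point: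
  fixes X :: "'a::euclidean_space set"
  defines "K \<equiv> {a. \<forall>x\<in>X. 0 \<le> a \<bullet> x}"
  assumes pos: "\<And>a. a \<in> K \<Longrightarrow> a \<noteq> 0 \<Longrightarrow> 0 < a \<bullet> c"
    and e: "e extreme_point_of (K \<inter> {a. a \<bullet> c = 1})"
  shows "extreme_ray_gen (dual_cone X) (\<lambda>x. e \<bullet> x)"
proof -
  have dual_iff: "(\<lambda>x. a \<bullet> x) \<in> dual_cone X \<longleftrightarrow> a \<in> K" for a
    by (simp add: mem_dual_cone_iff K_def linear_iff inner_add_right)
  have "e \<in> K" "e \<bullet> c = 1" using e by (auto simp: extreme_point_of_def)
  have "(\<lambda>x. e \<bullet> x) \<noteq> (\<lambda>x. 0)"
  proof
    assume "(\<lambda>x. e \<bullet> x) = (\<lambda>x. 0)"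
    hence "e \<bullet> c = 0" by (rule fun_cong)
    thus False using \<open>e \<bullet> c = 1\<close> by simp
  qed
  moreover have "\<exists>t\<ge>0. \<forall>x. h1 x = t * (e \<bullet> x)"
    if "h1 \<in> dual_cone X" "h2 \<in> dual_cone X" "\<forall>x. e \<bullet> x = h1 x + h2 x" for h1 h2
  proof -
    define a1 a2 where "a1 = adjoint h1 1" and "a2 = adjoint h2 1"
    have h1: "h1 = (\<lambda>x. a1 \<bullet> x)" and h2: "h2 = (\<lambda>x. a2 \<bullet> x)"
      using that(1,2) linear_real_eq_inner by (auto simp: mem_dual_cone_iff a1_def a2_def)
    have "a1 \<in> K" "a2 \<in> K" using that(1,2) h1 h2 dual_iff by auto
    moreover have "e = a1 + a2"
      using that(3) h1 h2 by (metis inner_add_left vector_eq_rdot)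
    ultimately have "a1 = (a1 \<bullet> c) *\<^sub>R e"
      using extreme_point_of_cone_slice_split[OF convex_cone_dual_vectors[of X]] pos e
      unfolding K_def by blast
    moreover have "0 \<le> a1 \<bullet> c" using pos \<open>a1 \<in> K\<close> by (cases "a1 = 0") (auto intro: less_imp_le)
    ultimately show ?thesis using h1 by (metis inner_scaleR_left)
  qed
  ultimately show ?thesis
    unfolding extreme_ray_gen_def using dual_iff \<open>e \<in> K\<close> by blast
qed


lemma nonneg_combination_of_dual_cone:
  fixes X :: "'a::euclidean_space set"
  assumes "span X = UNIV" "facet_map X hs" "h \<in> dual_cone X"
  shows "nonneg_combination hs h"
proof -
  define K where "K = {a. \<forall>x\<in>X. 0 \<le> a \<bullet> x}"
  define Q where "Q = {a. nonneg_combination hs (\<lambda>x. a \<bullet> x)}"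
  obtain c where pos: "\<And>a. a \<in> K \<Longrightarrow> a \<noteq> 0 \<Longrightarrow> 0 < a \<bullet> c"
    using spanning_set_dual_positive_point[OF assms(1)] unfolding K_def by blast
  define P where "P = K \<inter> {a. a \<bullet> c = 1}"
  have "convex_cone K" "closed K"
    unfolding K_def by (rule convex_cone_dual_vectors closed_dual_vectors)+
  have "compact P"
    unfolding P_def using \<open>closed K\<close> \<open>convex_cone K\<close> pos
    by (intro compact_cone_slice) (simp_all add: convex_cone_def)
  have "convex P"
    unfolding P_def using \<open>convex_cone K\<close> convex_hyperplane[of c 1]
    by (intro convex_Int) (simp_all add: convex_cone_def inner_commute)
  have "convex_cone Q" unfolding Q_def by (rule convex_cone_nonneg_combination_inner)
  have "e \<in> Q" if "e extreme_point_of P" for e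
  proof -
    have "extreme_ray_gen (dual_cone X) (\<lambda>x. e \<bullet> x)"
      using pos that unfolding K_def P_def by (rule extreme_ray_gen_of_extreme_point)
    then obtain i d where "i < length hs" "d > 0" "\<forall>x. e \<bullet> x = d * (hs ! i) x"
      using assms(2) unfolding facet_map_def by blast
    thus "e \<in> Q" unfolding Q_def using nonneg_combination_multiple[of i hs d] by simp
  qed
  hence "convex hull {e. e extreme_point_of P} \<subseteq> Q"
    using \<open>convex_cone Q\<close> by (intro hull_minimal) (auto simp: convex_cone_def)
  hence "P \<subseteq> Q" using Krein_Milman_Minkowski[OF \<open>compact P\<close> \<open>convex P\<close>] by simp
  define a where "a = adjoint h 1"
  have h: "h = (\<lambda>x. a \<bullet> x)"
    unfolding a_def using assms(3) by (intro linear_real_eq_inner) (simp add: mem_dual_cone_iff)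
  hence "a \<in> K" using assms(3) by (simp add: mem_dual_cone_iff K_def)
  have "a \<in> Q"
  proof (cases "a = 0")
    case True
    thus ?thesis using \<open>convex_cone Q\<close> convex_cone_contains_0 by blast
  next
    case False
    hence "0 < a \<bullet> c" using pos \<open>a \<in> K\<close> by blast
    hence "(1 / (a \<bullet> c)) *\<^sub>R a \<in> P"
      using \<open>a \<in> K\<close> \<open>convex_cone K\<close> by (simp add: P_def convex_cone_def conic_def)
    hence "(1 / (a \<bullet> c)) *\<^sub>R a \<in> Q" using \<open>P \<subseteq> Q\<close> by blast
    from convex_cone_scaleR[OF \<open>convex_cone Q\<close> _ this, of "a \<bullet> c"] \<open>0 < a \<bullet> c\<close>
    show ?thesis by simp
  qed
  thus ?thesis using h by (simp add: Q_def)
qed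

lemma dual_cone_family_coefficients:
  fixes X :: "'a::euclidean_space set"
  assumes "span X = UNIV" "facet_map X hs" "\<And>l. l < k \<Longrightarrow> f l \<in> dual_cone X"
  obtains c where "\<forall>l<k. \<forall>j<length hs. 0 \<le> c l j"
    "\<forall>l<k. \<forall>x. f l x = (\<Sum>j<length hs. c l j * (hs ! j) x)"
proof -
  have "\<forall>l. \<exists>c. l < k \<longrightarrow>
      (\<forall>j<length hs. 0 \<le> c j) \<and> (\<forall>x. f l x = (\<Sum>j<length hs. c j * (hs ! j) x))"
    using nonneg_combination_of_dual_cone[OF assms(1,2) assms(3)]
    unfolding nonneg_combination_def by blast
  from choice[OF this] obtain c where c: "\<And>l. l < k \<Longrightarrow>
      (\<forall>j<length hs. 0 \<le> c l j) \<and> (\<forall>x. f l x = (\<Sum>j<length hs. c l j * (hs ! j) x))"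
    by blast
  show ?thesis by (rule that[of c]) (auto dest: c)
qed

lemma sum_lessThan_mult_div_mod:
  fixes F :: "nat \<Rightarrow> nat \<Rightarrow> 'a::comm_monoid_add"
  shows "(\<Sum>l<m * n. F (l div n) (l mod n)) = (\<Sum>i<m. \<Sum>j<n. F i j)"
proof -
  have "(\<Sum>l<m * n. F (l div n) (l mod n)) = (\<Sum>i<m. \<Sum>l\<in>{i * n..<i * n + n}. F (l div n) (l mod n))"
    by (rule sum.nat_group[symmetric])
  also have "\<dots> = (\<Sum>i<m. \<Sum>j<n. F i j)"
  proof (rule sum.cong[OF refl])
    fix i
    have "(\<Sum>l\<in>{i * n..<i * n + n}. F (l div n) (l mod n))
        = (\<Sum>j\<in>{0..<n}. F ((j + i * n) div n) ((j + i * n) mod n))"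
      using sum.shift_bounds_nat_ivl[of "\<lambda>l. F (l div n) (l mod n)" 0 "i * n" n]
      by (simp add: add.commute)
    also have "\<dots> = (\<Sum>j<n. F i j)"
      by (rule sum.cong) (auto simp: atLeast0LessThan)
    finally show "(\<Sum>l\<in>{i * n..<i * n + n}. F (l div n) (l mod n)) = (\<Sum>j<n. F i j)" .
  qed
  finally show ?thesis .
qed

lemma admits_simplicial_cone_embedding_imp_nonneg_factorization:
  fixes \<Omega> :: "'a::euclidean_space set" and \<E> :: "'b::euclidean_space set"
  assumes "span \<Omega> = UNIV" "span \<E> = UNIV" "facet_map \<Omega> hs" "facet_map \<E> gs"
    and "admits_simplicial_cone_embedding \<Omega> \<E> B"
  shows "\<exists>\<sigma>. (\<forall>i<length gs. \<forall>j<length hs. 0 \<le> \<sigma> i j) \<and>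
    (\<forall>w v. B w v = (\<Sum>i<length gs. \<Sum>j<length hs. (gs ! i) w * \<sigma> i j * (hs ! j) v))"
proof -
  obtain k \<tau>\<Omega> \<tau>\<E> where emb: "simplicial_cone_embedding \<Omega> \<E> B k \<tau>\<Omega> \<tau>\<E>"
    using assms(5) unfolding admits_simplicial_cone_embedding_def by blast
  define m n where "m = length gs" and "n = length hs"
  obtain \<beta> where \<beta>: "\<forall>l<k. \<forall>j<n. 0 \<le> \<beta> l j"
    "\<forall>l<k. \<forall>v. \<tau>\<Omega> v l = (\<Sum>j<n. \<beta> l j * (hs ! j) v)"
    using dual_cone_family_coefficients[OF assms(1,3), of k "\<lambda>l v. \<tau>\<Omega> v l"] emb
    by (auto simp: mem_dual_cone_iff simplicial_cone_embedding_def n_def)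
  obtain \<alpha> where \<alpha>: "\<forall>l<k. \<forall>i<m. 0 \<le> \<alpha> l i"
    "\<forall>l<k. \<forall>w. \<tau>\<E> w l = (\<Sum>i<m. \<alpha> l i * (gs ! i) w)"
    using dual_cone_family_coefficients[OF assms(2,4), of k "\<lambda>l w. \<tau>\<E> w l"] emb
    by (auto simp: mem_dual_cone_iff simplicial_cone_embedding_def m_def)
  define \<sigma> where "\<sigma> i j = (\<Sum>l<k. \<alpha> l i * \<beta> l j)" for i j
  have "0 \<le> \<sigma> i j" if "i < m" "j < n" for i j
    using \<alpha> \<beta> that by (auto simp: \<sigma>_def intro!: sum_nonneg)
  moreover have "B w v = (\<Sum>i<m. \<Sum>j<n. (gs ! i) w * \<sigma> i j * (hs ! j) v)" for w v
  proof -
    have "B w v = (\<Sum>l<k. \<tau>\<E> w l * \<tau>\<Omega> v l)"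
      using emb by (simp add: simplicial_cone_embedding_def)
    also have "\<dots> = (\<Sum>l<k. (\<Sum>i<m. \<alpha> l i * (gs ! i) w) * (\<Sum>j<n. \<beta> l j * (hs ! j) v))"
      using \<alpha> \<beta> by (intro sum.cong) auto
    also have "\<dots> = (\<Sum>l<k. \<Sum>i<m. \<Sum>j<n. (gs ! i) w * (\<alpha> l i * \<beta> l j) * (hs ! j) v)"
      by (simp add: sum_product mult_ac)
    also have "\<dots> = (\<Sum>i<m. \<Sum>j<n. \<Sum>l<k. (gs ! i) w * (\<alpha> l i * \<beta> l j) * (hs ! j) v)"
      by (subst sum.swap) (intro sum.cong refl sum.swap)
    also have "\<dots> = (\<Sum>i<m. \<Sum>j<n. (gs ! i) w * \<sigma> i j * (hs ! j) v)"
      by (simp add: \<sigma>_def sum_distrib_left sum_distrib_right)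
    finally show ?thesis .
  qed
  ultimately show ?thesis unfolding m_def n_def by blast
qed

lemma simplicial_cone_embedding_of_nonneg_factorization:
  assumes "\<forall>j<length hs. hs ! j \<in> dual_cone \<Omega>" "\<forall>i<length gs. gs ! i \<in> dual_cone \<E>"
    and "\<forall>i<length gs. \<forall>j<length hs. 0 \<le> \<sigma> i j"
    and "\<forall>w v. B w v = (\<Sum>i<length gs. \<Sum>j<length hs. (gs ! i) w * \<sigma> i j * (hs ! j) v)"
  defines "n \<equiv> length hs"
  shows "simplicial_cone_embedding \<Omega> \<E> B (length gs * n)
    (\<lambda>v l. \<sigma> (l div n) (l mod n) * (hs ! (l mod n)) v) (\<lambda>w l. (gs ! (l div n)) w)"
  unfolding simplicial_cone_embedding_def
proof (intro conjI allI ballI impI)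
  fix l assume "l < length gs * n"
  hence "0 < n" by (cases n) auto
  with \<open>l < length gs * n\<close> have idx: "l div n < length gs" "l mod n < n"
    by (simp_all add: less_mult_imp_div_less)
  have lin: "linear (hs ! (l mod n))" using assms(1) idx by (simp add: mem_dual_cone_iff n_def)
  show "linear (\<lambda>v. \<sigma> (l div n) (l mod n) * (hs ! (l mod n)) v)"
    using linear_compose_scale_right[OF lin, of "\<sigma> (l div n) (l mod n)"]
    by (simp only: real_scaleR_def)
  show "linear (\<lambda>w. (gs ! (l div n)) w)"
    using assms(2) idx by (simp add: mem_dual_cone_iff)
  show "0 \<le> \<sigma> (l div n) (l mod n) * (hs ! (l mod n)) s" if "s \<in> \<Omega>" for s
    using assms(1,3) idx that by (simp add: mem_dual_cone_iff n_def)
  show "0 \<le> (gs ! (l div n)) e" if "e \<in> \<E>" for e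
    using assms(2) idx that by (simp add: mem_dual_cone_iff)
next
  fix w v
  show "B w v = (\<Sum>l<length gs * n. (gs ! (l div n)) w * (\<sigma> (l div n) (l mod n) * (hs ! (l mod n)) v))"
    using assms(4) sum_lessThan_mult_div_mod
        [where F="\<lambda>i j. (gs ! i) w * (\<sigma> i j * (hs ! j) v)" and m="length gs" and n=n]
    by (simp add: n_def mult_ac)
qed

lemma nonneg_factorization_imp_admits_simplicial_cone_embedding:
  assumes "\<forall>j<length hs. hs ! j \<in> dual_cone \<Omega>" "\<forall>i<length gs. gs ! i \<in> dual_cone \<E>"
    and "\<exists>\<sigma>. (\<forall>i<length gs. \<forall>j<length hs. 0 \<le> \<sigma> i j) \<and>
      (\<forall>w v. B w v = (\<Sum>i<length gs. \<Sum>j<length hs. (gs ! i) w * \<sigma> i j * (hs ! j) v))"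
  shows "admits_simplicial_cone_embedding \<Omega> \<E> B"
  using assms simplicial_cone_embedding_of_nonneg_factorization[of hs \<Omega> gs \<E>]
  unfolding admits_simplicial_cone_embedding_def by blast

theorem mainTheorem1:
  fixes \<Omega> :: "'a::euclidean_space set" and \<E> :: "'b::euclidean_space set"
    and B :: "'b \<Rightarrow> 'a \<Rightarrow> real" and u :: 'b
    and hs :: "('a \<Rightarrow> real) list" and gs :: "('b \<Rightarrow> real) list"
  assumes "accessible_gpt_fragment \<Omega> \<E> B u"
    and "facet_map \<Omega> hs" and "facet_map \<E> gs"
  shows "admits_simplicial_cone_embedding \<Omega> \<E> B \<longleftrightarrow>
    (\<exists>\<sigma> :: nat \<Rightarrow> nat \<Rightarrow> real.
        (\<forall>i<length gs. \<forall>j<length hs. 0 \<le> \<sigma> i j) \<and>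
        (\<forall>w v. B w v = (\<Sum>i<length gs. \<Sum>j<length hs. (gs ! i) w * \<sigma> i j * (hs ! j) v)))"
proof -
  have "span \<Omega> = UNIV" "span \<E> = UNIV"
    using assms(1) by (simp_all add: accessible_gpt_fragment_def)
  with assms(2,3) show ?thesis
    using admits_simplicial_cone_embedding_imp_nonneg_factorization
      nonneg_factorization_imp_admits_simplicial_cone_embedding
        [OF facet_map_dual_cone[OF assms(2)] facet_map_dual_cone[OF assms(3)]]
    by (intro iffI) blast+
qed

end
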